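(* Let $r\ge 1$ be an integer and let $G$ be an $r$-regular finite simple graph of order $n$. Then $$\gamma_{st}(G)=2\,\gamma_{\times\lceil (r+1)/2\rceil,t}(G)-n,$$ and, if moreover $r\ge 2$, $$\alpha^{2}_{st}(G)=n-2\,\gamma_{\times\lfloor r/2\rfloor,t}(G).$$
   Context: For a vertex $v$ of a graph $G=(V,E)$, $N(v)$ is its open neighborhood, and for $f:V\to\mathbb{R}$ and $B\subseteq V$ write $f(B)=\sum_{v\in B}f(v)$; $f(V)$ is the weight of $f$. A signed total dominating function is a function $f:V\to\{-1,1\}$ with $f(N(v))\ge 1$ for all $v\in V$; $\gamma_{st}(G)$ is the minimum weight of such a function. A signed total $2$-independence function is a function $f:V\to\{-1,1\}$ with $f(N(v))\le 1$ for all $v\in V$; $\alpha^{2}_{st}(G)$ is the maximum weight of such a function. For an integer $1\le k\le \delta(G)$, a $k$-tuple total dominating set of $G$ is a set $D\subseteq V$ with $|N(v)\cap D|\ge k$ for all $v\in V$; $\gamma_{\times k,t}(G)$ is the minimum cardinality of a $k$-tuple total dominating set. *)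

theory Defs
  imports Main
begin

definition simple_graph :: "'a set \<Rightarrow> ('a \<Rightarrow> 'a \<Rightarrow> bool) \<Rightarrow> bool" where
  "simple_graph V E \<longleftrightarrow> finite V \<and> (\<forall>u v. E u v \<longrightarrow> u \<in> V \<and> v \<in> V)
     \<and> (\<forall>u v. E u v \<longrightarrow> E v u) \<and> (\<forall>v. \<not> E v v)"

definition nbhd :: "'a set \<Rightarrow> ('a \<Rightarrow> 'a \<Rightarrow> bool) \<Rightarrow> 'a \<Rightarrow> 'a set" where
  "nbhd V E v = {u \<in> V. E v u}"

definition regular :: "'a set \<Rightarrow> ('a \<Rightarrow> 'a \<Rightarrow> bool) \<Rightarrow> nat \<Rightarrow> bool" where
  "regular V E r \<longleftrightarrow> (\<forall>v\<in>V. card (nbhd V E v) = r)"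

text \<open>Functions V -> {-1,1}; values outside V are normalised to 0 so the set of such functions is finite.\<close>
definition sign_funs :: "'a set \<Rightarrow> ('a \<Rightarrow> int) set" where
  "sign_funs V = {f. (\<forall>v\<in>V. f v = 1 \<or> f v = -1) \<and> (\<forall>v. v \<notin> V \<longrightarrow> f v = 0)}"

definition weight :: "'a set \<Rightarrow> ('a \<Rightarrow> int) \<Rightarrow> int" where
  "weight V f = (\<Sum>v\<in>V. f v)"

definition is_STDF :: "'a set \<Rightarrow> ('a \<Rightarrow> 'a \<Rightarrow> bool) \<Rightarrow> ('a \<Rightarrow> int) \<Rightarrow> bool" where
  "is_STDF V E f \<longleftrightarrow> f \<in> sign_funs V \<and> (\<forall>v\<in>V. (\<Sum>u\<in>nbhd V E v. f u) \<ge> 1)"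

definition gamma_st :: "'a set \<Rightarrow> ('a \<Rightarrow> 'a \<Rightarrow> bool) \<Rightarrow> int" where
  "gamma_st V E = Min (weight V ` {f. is_STDF V E f})"

definition is_ST2IF :: "'a set \<Rightarrow> ('a \<Rightarrow> 'a \<Rightarrow> bool) \<Rightarrow> ('a \<Rightarrow> int) \<Rightarrow> bool" where
  "is_ST2IF V E f \<longleftrightarrow> f \<in> sign_funs V \<and> (\<forall>v\<in>V. (\<Sum>u\<in>nbhd V E v. f u) \<le> 1)"

definition alpha2_st :: "'a set \<Rightarrow> ('a \<Rightarrow> 'a \<Rightarrow> bool) \<Rightarrow> int" where
  "alpha2_st V E = Max (weight V ` {f. is_ST2IF V E f})"

definition is_ktuple_tds :: "'a set \<Rightarrow> ('a \<Rightarrow> 'a \<Rightarrow> bool) \<Rightarrow> nat \<Rightarrow> 'a set \<Rightarrow> bool" where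
  "is_ktuple_tds V E k D \<longleftrightarrow> D \<subseteq> V \<and> (\<forall>v\<in>V. card (nbhd V E v \<inter> D) \<ge> k)"

definition gamma_ktuple_t :: "'a set \<Rightarrow> ('a \<Rightarrow> 'a \<Rightarrow> bool) \<Rightarrow> nat \<Rightarrow> nat" where
  "gamma_ktuple_t V E k = Min (card ` {D. is_ktuple_tds V E k D})"

end

theory Submission
  imports Defs
begin

text \<open>A function \<open>f : V \<rightarrow> {-1,1}\<close> is determined by its positive set \<open>P\<close>, and
  \<open>f(A) = 2|A \<inter> P| - |A|\<close>. In an \<open>r\<close>-regular graph the condition \<open>f(N(v)) \<ge> 1\<close>
  therefore says \<open>|N(v) \<inter> P| \<ge> \<lceil>(r+1)/2\<rceil>\<close>, and \<open>f(N(v)) \<le> 1\<close> says that the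
  negative set \<open>V - P\<close> meets \<open>N(v)\<close> in at least \<open>\<lfloor>r/2\<rfloor>\<close> vertices. Signed total
  dominating functions thus correspond to \<open>\<lceil>(r+1)/2\<rceil>\<close>-tuple total dominating sets
  (their positive sets), and signed total 2-independence functions to
  \<open>\<lfloor>r/2\<rfloor>\<close>-tuple total dominating sets (their negative sets); the weight is an
  affine function of the size of that set.\<close>

lemma antimono_Min_commute:
  assumes "antimono f" and "finite A" and "A \<noteq> {}"
  shows "f (Min A) = Max (f ` A)"
proof (rule Max_eqI [symmetric])
  show "finite (f ` A)" using assms(2) by simp
  show "f (Min A) \<in> f ` A" using assms(2,3) by simp
  fix x assume "x \<in> f ` A"
  then obtain y where "y \<in> A" and "x = f y" ..
  with assms have "Min A \<le> y" by simp
  with \<open>antimono f\<close> \<open>x = f y\<close> show "x \<le> f (Min A)" by (simp add: antimonoD)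
qed

definition sign_fun_of :: "'a set \<Rightarrow> 'a set \<Rightarrow> 'a \<Rightarrow> int" where
  "sign_fun_of V P v = (if v \<in> P then 1 else if v \<in> V then -1 else 0)"

lemma sign_fun_of_in_sign_funs: "P \<subseteq> V \<Longrightarrow> sign_fun_of V P \<in> sign_funs V"
  by (auto simp: sign_fun_of_def sign_funs_def)

lemma sign_funs_eq_image_sign_fun_of: "sign_funs V = sign_fun_of V ` Pow V"
proof
  show "sign_funs V \<subseteq> sign_fun_of V ` Pow V"
  proof
    fix f assume f: "f \<in> sign_funs V"
    have "f = sign_fun_of V {v \<in> V. f v = 1}"
      using f by (force simp: sign_fun_of_def sign_funs_def)
    then show "f \<in> sign_fun_of V ` Pow V" by blast
  qed
  show "sign_fun_of V ` Pow V \<subseteq> sign_funs V"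
    using sign_fun_of_in_sign_funs by blast
qed

lemma sum_sign_fun_of:
  assumes "finite A" and "A \<subseteq> V"
  shows "(\<Sum>u\<in>A. sign_fun_of V P u) = 2 * int (card (A \<inter> P)) - int (card A)"
proof -
  have "(\<Sum>u\<in>A. sign_fun_of V P u) = (\<Sum>u\<in>A. if u \<in> P then 1 else -1)"
    using assms(2) by (intro sum.cong) (auto simp: sign_fun_of_def)
  also have "\<dots> = int (card (A \<inter> P)) - int (card (A - P))"
    using assms(1) by (simp add: sum.If_cases Diff_eq Collect_mem_eq)
  also have "card A = card (A \<inter> P) + card (A - P)"
    using assms(1) by (rule card_Int_Diff)
  ultimately show ?thesis by simp
qed

lemma weight_sign_fun_of:
  "finite V \<Longrightarrow> P \<subseteq> V \<Longrightarrow> weight V (sign_fun_of V P) = 2 * int (card P) - int (card V)"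
  by (simp add: weight_def sum_sign_fun_of Int_absorb1)

lemma sum_nbhd_sign_fun_of:
  assumes "finite V" and "regular V E r" and "v \<in> V"
  shows "(\<Sum>u\<in>nbhd V E v. sign_fun_of V P u) = 2 * int (card (nbhd V E v \<inter> P)) - int r"
proof -
  have "nbhd V E v \<subseteq> V" by (auto simp: nbhd_def)
  with assms show ?thesis
    by (simp add: sum_sign_fun_of finite_subset regular_def)
qed

lemma card_nbhd_Int_compl:
  assumes "finite V" and "regular V E r" and "v \<in> V"
  shows "card (nbhd V E v \<inter> (V - D)) = r - card (nbhd V E v \<inter> D)"
proof -
  have "nbhd V E v \<subseteq> V" by (auto simp: nbhd_def)
  then have "nbhd V E v \<inter> (V - D) = nbhd V E v - D" by blast
  with assms \<open>nbhd V E v \<subseteq> V\<close> show ?thesis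
    by (simp add: card_Diff_subset_Int finite_subset regular_def)
qed

lemma is_ktuple_tds_vertex_set:
  "regular V E r \<Longrightarrow> k \<le> r \<Longrightarrow> is_ktuple_tds V E k V"
  by (simp add: is_ktuple_tds_def regular_def nbhd_def Int_absorb2)

lemma finite_ktuple_tds: "finite V \<Longrightarrow> finite {D. is_ktuple_tds V E k D}"
  by (rule finite_subset[of _ "Pow V"]) (auto simp: is_ktuple_tds_def)

lemma is_STDF_sign_fun_of_iff:
  assumes "finite V" and "regular V E r" and "P \<subseteq> V"
  shows "is_STDF V E (sign_fun_of V P) \<longleftrightarrow> is_ktuple_tds V E ((r + 2) div 2) P"
  using assms by (auto simp: is_STDF_def is_ktuple_tds_def sign_fun_of_in_sign_funs
      sum_nbhd_sign_fun_of)

lemma is_ST2IF_sign_fun_of_compl_iff: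
  assumes "finite V" and "regular V E r" and "D \<subseteq> V"
  shows "is_ST2IF V E (sign_fun_of V (V - D)) \<longleftrightarrow> is_ktuple_tds V E (r div 2) D"
proof -
  have "(\<Sum>u\<in>nbhd V E v. sign_fun_of V (V - D) u) \<le> 1 \<longleftrightarrow> r div 2 \<le> card (nbhd V E v \<inter> D)"
    if "v \<in> V" for v
  proof -
    have "card (nbhd V E v \<inter> D) \<le> card (nbhd V E v)"
      using assms(1) by (intro card_mono) (auto simp: nbhd_def)
    then have "card (nbhd V E v \<inter> D) \<le> r"
      using assms(2) \<open>v \<in> V\<close> by (simp add: regular_def)
    moreover have "(\<Sum>u\<in>nbhd V E v. sign_fun_of V (V - D) u)
        = int r - 2 * int (card (nbhd V E v \<inter> D))"
      using assms(1,2) \<open>v \<in> V\<close> \<open>card (nbhd V E v \<inter> D) \<le> r\<close>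
      by (simp add: sum_nbhd_sign_fun_of card_nbhd_Int_compl)
    ultimately show ?thesis by presburger
  qed
  then show ?thesis
    using assms(3) by (auto simp: is_ST2IF_def is_ktuple_tds_def sign_fun_of_in_sign_funs)
qed

lemma STDFs_eq_image:
  assumes "finite V" and "regular V E r"
  shows "{f. is_STDF V E f} = sign_fun_of V ` {P. is_ktuple_tds V E ((r + 2) div 2) P}"
proof -
  have "{f. is_STDF V E f} = {f \<in> sign_fun_of V ` Pow V. is_STDF V E f}"
    by (auto simp: is_STDF_def sign_funs_eq_image_sign_fun_of)
  also have "\<dots> = sign_fun_of V ` {P. is_ktuple_tds V E ((r + 2) div 2) P}"
    using is_STDF_sign_fun_of_iff[OF assms] by (auto simp: is_ktuple_tds_def)
  finally show ?thesis .
qed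

lemma ST2IFs_eq_image:
  assumes "finite V" and "regular V E r"
  shows "{f. is_ST2IF V E f} = (\<lambda>D. sign_fun_of V (V - D)) ` {D. is_ktuple_tds V E (r div 2) D}"
proof -
  have "(\<lambda>D. V - D) ` Pow V = Pow V" by (auto simp: image_def)
  then have "sign_funs V = (\<lambda>D. sign_fun_of V (V - D)) ` Pow V"
    by (metis sign_funs_eq_image_sign_fun_of image_image)
  then have "{f. is_ST2IF V E f} = {f \<in> (\<lambda>D. sign_fun_of V (V - D)) ` Pow V. is_ST2IF V E f}"
    by (auto simp: is_ST2IF_def)
  also have "\<dots> = (\<lambda>D. sign_fun_of V (V - D)) ` {D. is_ktuple_tds V E (r div 2) D}"
    using is_ST2IF_sign_fun_of_compl_iff[OF assms] by (auto simp: is_ktuple_tds_def)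
  finally show ?thesis .
qed

lemma gamma_st_regular:
  assumes "finite V" and "regular V E r" and "1 \<le> r"
  shows "gamma_st V E = 2 * int (gamma_ktuple_t V E ((r + 2) div 2)) - int (card V)"
proof -
  let ?K = "{P. is_ktuple_tds V E ((r + 2) div 2) P}"
  have "weight V ` {f. is_STDF V E f} = (\<lambda>c. 2 * int c - int (card V)) ` card ` ?K"
    using assms by (auto simp: STDFs_eq_image image_image weight_sign_fun_of is_ktuple_tds_def
        intro!: image_cong)
  moreover have "card ` ?K \<noteq> {}"
    using is_ktuple_tds_vertex_set[OF assms(2), of "(r + 2) div 2"] assms(3) by fastforce
  moreover have "mono (\<lambda>c. 2 * int c - int (card V))" by (rule monoI) simp
  ultimately show ?thesis
    using mono_Min_commute finite_ktuple_tds[OF assms(1)]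
    unfolding gamma_st_def gamma_ktuple_t_def by (metis finite_imageI)
qed

text \<open>No lower bound on \<open>r\<close> is needed here; the paper asks for \<open>r \<ge> 2\<close> only because
  it defines \<open>k\<close>-tuple total domination for \<open>k \<ge> 1\<close>.\<close>

lemma alpha2_st_regular:
  assumes "finite V" and "regular V E r"
  shows "alpha2_st V E = int (card V) - 2 * int (gamma_ktuple_t V E (r div 2))"
proof -
  let ?K = "{D. is_ktuple_tds V E (r div 2) D}"
  have "weight V (sign_fun_of V (V - D)) = int (card V) - 2 * int (card D)" if "D \<subseteq> V" for D
    using assms(1) that
    by (simp add: weight_sign_fun_of card_Diff_subset finite_subset card_mono of_nat_diff)
  then have "weight V ` {f. is_ST2IF V E f} = (\<lambda>c. int (card V) - 2 * int c) ` card ` ?K"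
    using assms by (auto simp: ST2IFs_eq_image image_image is_ktuple_tds_def intro!: image_cong)
  moreover have "card ` ?K \<noteq> {}"
    using is_ktuple_tds_vertex_set[OF assms(2), of "r div 2"] by auto
  moreover have "antimono (\<lambda>c. int (card V) - 2 * int c)" by (rule antimonoI) simp
  ultimately show ?thesis
    using antimono_Min_commute finite_ktuple_tds[OF assms(1)]
    unfolding alpha2_st_def gamma_ktuple_t_def by (metis finite_imageI)
qed

theorem mainTheorem6:
  fixes V :: "'a set" and E :: "'a \<Rightarrow> 'a \<Rightarrow> bool" and r n :: nat
  assumes "simple_graph V E" and "regular V E r" and "r \<ge> 1" and "card V = n"
  shows "gamma_st V E = 2 * int (gamma_ktuple_t V E ((r + 2) div 2)) - int n
         \<and> (r \<ge> 2 \<longrightarrow> alpha2_st V E = int n - 2 * int (gamma_ktuple_t V E (r div 2)))"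
proof -
  have "finite V" using assms(1) by (simp add: simple_graph_def)
  with assms(2-4) show ?thesis
    using gamma_st_regular alpha2_st_regular by blast
qed

end
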